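(* $\displaystyle\sup_{\varphi\in\mathcal F}\int_{\mathbb R^d}\varphi(x)\,dx=\frac{\mathrm{vol}(B)}{2^d\delta}.$
   Context: $\|\cdot\|$ is a norm on $\mathbb R^d$, $B=\{x:\|x\|<1\}$. For $K>0$ let $N(K)$ be the maximum number of pairwise disjoint translates of $B$ with centres in $(0,K)^d$; $\delta:=\lim_{K\to\infty}N(K)\mathrm{vol}(B)/K^d$ is the packing density. A set $S$ is well-spread if $\|v-w\|>1$ for all distinct $v,w\in S$; a nonnegative measurable $\varphi$ is feasible if $\sum_{v\in S}\varphi(v)\le1$ for every well-spread $S$; $\mathcal F$ is the set of feasible functions. *)

theory Defs
  imports "HOL-Analysis.Analysis"
begin

text \<open>A norm on R^d, given as a function (not necessarily the Euclidean one).\<close>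
definition is_norm :: "(real^'d \<Rightarrow> real) \<Rightarrow> bool" where
  "is_norm nrm \<longleftrightarrow>
     (\<forall>x y. nrm (x + y) \<le> nrm x + nrm y) \<and>
     (\<forall>c x. nrm (c *\<^sub>R x) = \<bar>c\<bar> * nrm x) \<and>
     (\<forall>x. nrm x = 0 \<longleftrightarrow> x = 0)"

definition unit_ball :: "(real^'d \<Rightarrow> real) \<Rightarrow> (real^'d) set" where
  "unit_ball nrm = {x. nrm x < 1}"

definition max_packing :: "(real^'d \<Rightarrow> real) \<Rightarrow> real \<Rightarrow> nat" where
  "max_packing nrm K = Max {card C | C.
      finite C \<and> C \<subseteq> {x. \<forall>i. 0 < x $ i \<and> x $ i < K} \<and>
      (\<forall>c\<in>C. \<forall>c'\<in>C. c \<noteq> c' \<longrightarrow>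
          ((+) c ` unit_ball nrm) \<inter> ((+) c' ` unit_ball nrm) = {})}"

definition packing_density :: "(real^'d \<Rightarrow> real) \<Rightarrow> real" where
  "packing_density nrm =
     Lim at_top (\<lambda>K::real. real (max_packing nrm K) * measure lborel (unit_ball nrm)
                            / K ^ CARD('d))"

definition well_spread :: "(real^'d \<Rightarrow> real) \<Rightarrow> (real^'d) set \<Rightarrow> bool" where
  "well_spread nrm S \<longleftrightarrow> (\<forall>v\<in>S. \<forall>w\<in>S. v \<noteq> w \<longrightarrow> nrm (v - w) > 1)"

definition feasible :: "(real^'d \<Rightarrow> real) \<Rightarrow> (real^'d \<Rightarrow> real) \<Rightarrow> bool" where
  "feasible nrm \<phi> \<longleftrightarrow>
     (\<forall>x. 0 \<le> \<phi> x) \<and> \<phi> \<in> borel_measurable lebesgue \<and>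
     (\<forall>S. well_spread nrm S \<longrightarrow> (\<Sum>\<^sub>\<infinity>v\<in>S. ennreal (\<phi> v)) \<le> 1)"

end

theory Submission
  imports Defs
begin

(* Let sigma be the supremum of the integrals of feasible functions and N(K) the maximal size
   of a packing of translates of B with centres in (0,K)^d.  We bound N(K) * sigma from both
   sides and pass to the limit K -> infinity in the definition of the packing density.

   Lower bound: a well-spread subset of the cube (0,K/2)^d doubles to a packing, so it has at
   most N(K) points; hence the indicator of that cube divided by N(K) is feasible, and
   sigma >= (K/2)^d / N(K).

   Upper bound: averaging a feasible phi over the translates by a finite well-spread set S
   lying in a box [0,W]^d shows |S| * (integral of phi over (-r,r)^d) <= (2r + W)^d.  Tiling an
   optimal packing periodically with period K + h (h comes from the equivalence of nrm with the
   Euclidean norm) and shrinking it by a factor slightly above 1/2 gives such sets S; letting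
   the number of tiles grow yields N(K) * sigma <= (q (K + h) / 2)^d for every q > 1.

   Hence (K/2)^d <= N(K) sigma <= ((1 + 1/K)(K + h)/2)^d, so N(K) vol(B) / K^d converges to
   vol(B) / (2^d sigma), which is the claim since 0 < vol(B) < infinity and 0 < sigma < infinity. *)

section \<open>An abstract norm on \<open>\<real>\<^sup>d\<close>\<close>

locale abstract_norm =
  fixes nrm :: "real^'d \<Rightarrow> real"
  assumes is_norm: "is_norm nrm"
begin

lemma nrm_triangle: "nrm (x + y) \<le> nrm x + nrm y"
  using is_norm unfolding is_norm_def by blast

lemma nrm_scaleR: "nrm (c *\<^sub>R x) = \<bar>c\<bar> * nrm x"
  using is_norm unfolding is_norm_def by blast

lemma nrm_eq_0_iff: "nrm x = 0 \<longleftrightarrow> x = 0"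
  using is_norm unfolding is_norm_def by blast

lemma nrm_zero [simp]: "nrm 0 = 0"
  using nrm_eq_0_iff by simp

lemma nrm_minus: "nrm (- x) = nrm x"
  using nrm_scaleR[of "-1" x] by simp

lemma nrm_nonneg: "0 \<le> nrm x"
  using nrm_triangle[of x "- x"] nrm_minus[of x] by simp

lemma nrm_reverse_triangle: "\<bar>nrm x - nrm y\<bar> \<le> nrm (x - y)"
  using nrm_triangle[of y "x - y"] nrm_triangle[of x "y - x"] nrm_minus[of "x - y"] by simp

lemma nrm_sum: "finite A \<Longrightarrow> nrm (sum f A) \<le> (\<Sum>i\<in>A. nrm (f i))"
  by (induction A rule: finite_induct) (auto intro: order_trans[OF nrm_triangle])

definition nrm_upper :: real where
  "nrm_upper = (\<Sum>i\<in>UNIV. nrm (axis i (1::real) :: real^'d))"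

lemma nrm_upper_nonneg: "0 \<le> nrm_upper"
  unfolding nrm_upper_def by (intro sum_nonneg nrm_nonneg)

lemma nrm_le_norm: "nrm x \<le> nrm_upper * norm x"
proof -
  have "nrm x \<le> (\<Sum>i\<in>UNIV. nrm (x $ i *\<^sub>R axis i (1::real)))"
    using nrm_sum basis_expansion[of x] by (metis finite scalar_mult_eq_scaleR)
  also have "\<dots> = (\<Sum>i\<in>UNIV. \<bar>x $ i\<bar> * nrm (axis i (1::real)))"
    by (simp add: nrm_scaleR)
  also have "\<dots> \<le> (\<Sum>i\<in>UNIV. norm x * nrm (axis i (1::real)))"
    by (intro sum_mono mult_right_mono) (auto simp: component_le_norm_cart nrm_nonneg)
  finally show ?thesis by (simp add: nrm_upper_def sum_distrib_left mult.commute)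
qed

lemma nrm_continuous: "continuous_on UNIV nrm"
proof (rule lipschitz_on_continuous_on[of nrm_upper])
  show "nrm_upper-lipschitz_on UNIV nrm"
    using nrm_reverse_triangle nrm_le_norm nrm_upper_nonneg
    by (intro lipschitz_onI) (auto simp: dist_real_def dist_norm intro: order_trans)
qed

text \<open>Comparison from below: \<open>nrm\<close> attains a positive minimum on the Euclidean unit sphere.\<close>

lemma nrm_lower_ex: "\<exists>a>0. \<forall>x. a * norm x \<le> nrm x"
proof -
  have "continuous_on (sphere 0 1) nrm"
    using nrm_continuous continuous_on_subset by blast
  then obtain z :: "real^'d" where z: "z \<in> sphere 0 1" "\<forall>y\<in>sphere 0 1. nrm z \<le> nrm y"
    using continuous_attains_inf[of "sphere 0 1" nrm] by auto
  have "nrm z > 0"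
    using z(1) nrm_eq_0_iff[of z] nrm_nonneg[of z] by auto
  moreover have "nrm z * norm x \<le> nrm x" for x :: "real^'d"
  proof (cases "x = 0")
    case False
    then have "nrm z \<le> nrm (inverse (norm x) *\<^sub>R x)"
      using z(2) by simp
    also have "\<dots> = nrm x / norm x"
      by (simp add: nrm_scaleR field_simps)
    finally show ?thesis
      using False by (simp add: field_simps)
  qed simp
  ultimately show ?thesis by blast
qed

definition nrm_lower :: real where
  "nrm_lower = (SOME a. a > 0 \<and> (\<forall>x. a * norm x \<le> nrm x))"

lemma nrm_lower_pos: "0 < nrm_lower"
  and norm_le_nrm: "nrm_lower * norm x \<le> nrm x"
  using someI_ex[OF nrm_lower_ex] unfolding nrm_lower_def by auto

lemma component_le_nrm: "nrm_lower * \<bar>x $ i\<bar> \<le> nrm x"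
  using norm_le_nrm[of x] nrm_lower_pos component_le_norm_cart[of x i]
  by (meson mult_left_mono order.trans less_imp_le)

lemma unit_ball_borel: "unit_ball nrm \<in> sets borel"
  unfolding unit_ball_def
  using open_Collect_less[OF nrm_continuous continuous_on_const, of 1] by simp

lemma unit_ball_bounded: "bounded (unit_ball nrm)"
proof -
  have "norm x \<le> 1 / nrm_lower" if "x \<in> unit_ball nrm" for x
    using that norm_le_nrm[of x] nrm_lower_pos by (simp add: unit_ball_def field_simps)
  then show ?thesis
    unfolding bounded_iff by blast
qed

lemma translates_disjoint_iff:
  "((+) c ` unit_ball nrm \<inter> (+) c' ` unit_ball nrm = {}) \<longleftrightarrow> 2 \<le> nrm (c - c')"
proof
  assume disj: "(+) c ` unit_ball nrm \<inter> (+) c' ` unit_ball nrm = {}"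
  show "2 \<le> nrm (c - c')"
  proof (rule ccontr)
    assume "\<not> 2 \<le> nrm (c - c')"
    then have "(1/2) *\<^sub>R (c' - c) \<in> unit_ball nrm" "(1/2) *\<^sub>R (c - c') \<in> unit_ball nrm"
      using nrm_minus[of "c - c'"] by (auto simp: unit_ball_def nrm_scaleR)
    moreover have "c + (1/2) *\<^sub>R (c' - c) = c' + (1/2) *\<^sub>R (c - c')"
      by (simp add: vec_eq_iff field_simps)
    ultimately show False
      using disj by (metis disjoint_iff imageI)
  qed
next
  assume far: "2 \<le> nrm (c - c')"
  show "(+) c ` unit_ball nrm \<inter> (+) c' ` unit_ball nrm = {}"
  proof (rule ccontr)
    assume "(+) c ` unit_ball nrm \<inter> (+) c' ` unit_ball nrm \<noteq> {}"
    then obtain u u' where u: "nrm u < 1" "nrm u' < 1" "c + u = c' + u'"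
      by (auto simp: unit_ball_def)
    then have "c - c' = u' + - u"
      by (simp add: algebra_simps)
    then have "nrm (c - c') \<le> nrm u' + nrm u"
      using nrm_triangle[of u' "- u"] nrm_minus[of u] by simp
    with u far show False by linarith
  qed
qed

end

section \<open>Translation invariance of Lebesgue measure\<close>

lemma lebesgue_translate:
  fixes t :: "'a::euclidean_space"
  shows "distr lebesgue lebesgue ((+) t) = lebesgue"
    and "(+) t \<in> lebesgue \<rightarrow>\<^sub>M lebesgue"
proof -
  have T: "(\<lambda>x::'a. t + (\<Sum>j\<in>Basis. (1 * (x \<bullet> j)) *\<^sub>R j)) = (+) t"
    by (simp add: euclidean_representation)
  show "distr lebesgue lebesgue ((+) t) = lebesgue"
    using lebesgue_affine_euclidean[of "\<lambda>_. 1" t] unfolding T by (simp add: density_1)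
  show "(+) t \<in> lebesgue \<rightarrow>\<^sub>M lebesgue"
    using lebesgue_affine_measurable[of "\<lambda>_. 1" t] unfolding T by simp
qed

lemma measurable_translate:
  fixes f :: "'a::euclidean_space \<Rightarrow> 'b::topological_space"
  assumes "f \<in> borel_measurable lebesgue"
  shows "(\<lambda>x. f (t + x)) \<in> borel_measurable lebesgue"
  using measurable_comp[OF lebesgue_translate(2) assms] by (simp add: o_def)

lemma nn_integral_translate:
  fixes f :: "'a::euclidean_space \<Rightarrow> ennreal"
  assumes "f \<in> borel_measurable lebesgue"
  shows "(\<integral>\<^sup>+x. f (t + x) \<partial>lebesgue) = (\<integral>\<^sup>+x. f x \<partial>lebesgue)"
proof -
  have "(\<integral>\<^sup>+x. f x \<partial>lebesgue) = (\<integral>\<^sup>+x. f x \<partial>distr lebesgue lebesgue ((+) t))"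
    by (simp add: lebesgue_translate)
  also have "\<dots> = (\<integral>\<^sup>+x. f (t + x) \<partial>lebesgue)"
    by (rule nn_integral_distr[OF lebesgue_translate(2)]) (use assms in simp)
  finally show ?thesis by simp
qed

definition cube :: "real \<Rightarrow> real \<Rightarrow> (real^'d) set" where
  "cube l u = box (\<chi> i. l) (\<chi> i. u)"

lemma mem_cube: "x \<in> cube l u \<longleftrightarrow> (\<forall>i. l < x $ i \<and> x $ i < u)"
  by (simp add: cube_def mem_box_cart)

lemma cube_borel [measurable]: "cube l u \<in> sets borel"
  unfolding cube_def by simp

lemma cube_lebesgue [measurable]: "cube l u \<in> sets lebesgue"
  unfolding cube_def by simp

lemma cube_mono:
  assumes "l' \<le> l" "u \<le> u'"
  shows "cube l u \<subseteq> cube l' u'"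
proof
  fix x assume x: "x \<in> cube l u"
  show "x \<in> cube l' u'"
    unfolding mem_cube
  proof
    fix i
    have "l < x $ i" "x $ i < u"
      using x unfolding mem_cube by auto
    then show "l' < x $ i \<and> x $ i < u'"
      using assms by linarith
  qed
qed

lemma emeasure_cube:
  assumes "l \<le> u"
  shows "emeasure lebesgue (cube l u :: (real^'d) set) = ennreal ((u - l) ^ CARD('d))"
proof -
  have "emeasure lebesgue (cube l u :: (real^'d) set) = emeasure lborel (cube l u :: (real^'d) set)"
    unfolding cube_def by simp
  also have "\<dots> = (\<Prod>b\<in>(Basis :: (real^'d) set). ((\<chi> i. u) - (\<chi> i. l)) \<bullet> b)"
    unfolding cube_def using assms
    by (subst emeasure_lborel_box) (auto simp: Basis_vec_def inner_axis)
  also have "\<dots> = (\<Prod>b\<in>(Basis :: (real^'d) set). (u - l))"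
    by (intro arg_cong[where f=ennreal] prod.cong) (auto simp: Basis_vec_def inner_axis)
  finally show ?thesis
    using assms by (simp add: prod_constant)
qed

lemma nn_integral_SUP_cubes:
  fixes \<phi> :: "real^'d \<Rightarrow> real"
  assumes "\<phi> \<in> borel_measurable lebesgue"
  shows "(\<integral>\<^sup>+x. ennreal (\<phi> x) \<partial>lebesgue)
       = (SUP r::nat. \<integral>\<^sup>+x. ennreal (\<phi> x) * indicator (cube (- real r) (real r)) x \<partial>lebesgue)"
proof -
  let ?f = "\<lambda>(r::nat) x. ennreal (\<phi> x) * indicator (cube (- real r) (real r)) x :: ennreal"
  have inc: "incseq ?f"
  proof (intro monoI le_funI)
    fix r s :: nat and x :: "real^'d" assume "r \<le> s"
    then have "cube (- real r) (real r) \<subseteq> (cube (- real s) (real s) :: (real^'d) set)"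
      by (intro cube_mono) auto
    then show "?f r x \<le> ?f s x"
      by (auto simp: indicator_def)
  qed
  have pointwise: "(SUP r. ?f r x) = ennreal (\<phi> x)" for x
  proof (rule antisym)
    show "(SUP r. ?f r x) \<le> ennreal (\<phi> x)"
      by (rule SUP_least) (auto simp: indicator_def)
    define r0 where "r0 = nat \<lceil>norm x\<rceil> + 1"
    have "x \<in> cube (- real r0) (real r0)"
      unfolding mem_cube
    proof
      fix i
      have "\<bar>x $ i\<bar> \<le> norm x" "norm x < real r0"
        unfolding r0_def using component_le_norm_cart[of x i] by linarith+
      then show "- real r0 < x $ i \<and> x $ i < real r0"
        by linarith
    qed
    then have "ennreal (\<phi> x) = ?f r0 x"
      by simp
    also have "\<dots> \<le> (SUP r. ?f r x)"
      by (rule SUP_upper) simp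
    finally show "ennreal (\<phi> x) \<le> (SUP r. ?f r x)" .
  qed
  have "(\<integral>\<^sup>+x. ennreal (\<phi> x) \<partial>lebesgue) = (\<integral>\<^sup>+x. (SUP r. ?f r x) \<partial>lebesgue)"
    by (simp add: pointwise)
  also have "\<dots> = (SUP r. integral\<^sup>N lebesgue (?f r))"
    by (rule nn_integral_monotone_convergence_SUP[OF inc]) (use assms in simp)
  finally show ?thesis .
qed

lemma nn_integral_cube_le_shifted:
  fixes \<phi> :: "real^'d \<Rightarrow> real"
  assumes "\<phi> \<in> borel_measurable lebesgue" and s: "\<And>i. 0 \<le> s $ i \<and> s $ i \<le> W"
  shows "(\<integral>\<^sup>+x. ennreal (\<phi> x) * indicator (cube (-r) r) x \<partial>lebesgue)
       \<le> (\<integral>\<^sup>+x. ennreal (\<phi> (s + x)) * indicator (cube (-r-W) r) x \<partial>lebesgue)"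
proof -
  let ?A = "cube (-r-W) r :: (real^'d) set"
  have "x - s \<in> ?A" if x: "x \<in> cube (-r) r" for x
    unfolding mem_cube
  proof
    fix i
    have "-r < x $ i" "x $ i < r" "0 \<le> s $ i" "s $ i \<le> W"
      using x s unfolding mem_cube by auto
    then show "-r - W < (x - s) $ i \<and> (x - s) $ i < r"
      by simp
  qed
  then have "(\<integral>\<^sup>+x. ennreal (\<phi> x) * indicator (cube (-r) r) x \<partial>lebesgue)
      \<le> (\<integral>\<^sup>+x. ennreal (\<phi> x) * indicator ?A (-s + x) \<partial>lebesgue)"
    by (intro nn_integral_mono mult_left_mono) (auto simp: indicator_def)
  also have "\<dots> = (\<integral>\<^sup>+x. ennreal (\<phi> (s + x)) * indicator ?A x \<partial>lebesgue)"
    using nn_integral_translate[of "\<lambda>x. ennreal (\<phi> x) * indicator ?A (-s + x)" s]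
      measurable_translate[of "indicator ?A :: _ \<Rightarrow> ennreal" "-s"] assms(1)
    by simp
  finally show ?thesis .
qed

definition tile_point :: "real \<Rightarrow> real^'d \<Rightarrow> ('d \<Rightarrow> nat) \<Rightarrow> real^'d" where
  "tile_point P c f = c + P *\<^sub>R (\<chi> i. real (f i))"

lemma periodic_shift_gap:
  fixes a b K h :: real and u v :: nat
  assumes "0 < a" "a < K" "0 < b" "b < K" "u \<noteq> v" "0 < h"
  shows "h < \<bar>a - b + (K + h) * (real u - real v)\<bar>"
proof (cases "u < v")
  case True
  then have "(K + h) * (real u - real v) \<le> (K + h) * (-1)"
    using assms by (intro mult_left_mono) auto
  then have "(K + h) * (real u - real v) \<le> - (K + h)"
    by simp
  then show ?thesis using assms by linarith
next
  case False
  then have "(K + h) * (real u - real v) \<ge> (K + h) * 1"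
    using assms by (intro mult_left_mono) auto
  then have "(K + h) * (real u - real v) \<ge> K + h"
    by simp
  then show ?thesis using assms by linarith
qed

lemma tile_point_box:
  assumes "0 < c $ i" "c $ i < K" "f i < m" "K < P"
  shows "0 < tile_point P c f $ i \<and> tile_point P c f $ i < real m * P"
proof -
  have "real (f i) \<le> real m - 1"
    using assms(3) by linarith
  then have "P * real (f i) \<le> P * (real m - 1)"
    using assms by (intro mult_left_mono) auto
  moreover have "0 \<le> P * real (f i)"
    using assms by simp
  moreover have "tile_point P c f $ i = c $ i + P * real (f i)" "P * (real m - 1) = real m * P - P"
    by (simp_all add: tile_point_def algebra_simps)
  ultimately show ?thesis
    using assms by linarith
qed

section \<open>Feasible functions\<close>

context abstract_norm
begin

lemma well_spread_subset: "well_spread nrm S \<Longrightarrow> T \<subseteq> S \<Longrightarrow> well_spread nrm T"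
  unfolding well_spread_def by blast

lemma feasible_sum_translate:
  assumes "feasible nrm \<phi>" "finite S" "well_spread nrm S"
  shows "(\<Sum>s\<in>S. ennreal (\<phi> (s + x))) \<le> 1"
proof -
  have "well_spread nrm ((\<lambda>s. s + x) ` S)"
    using assms(3) unfolding well_spread_def by auto
  then have "(\<Sum>\<^sub>\<infinity>v\<in>(\<lambda>s. s + x) ` S. ennreal (\<phi> v)) \<le> 1"
    using assms(1) unfolding feasible_def by blast
  moreover have "(\<Sum>\<^sub>\<infinity>v\<in>(\<lambda>s. s + x) ` S. ennreal (\<phi> v)) = (\<Sum>s\<in>S. ennreal (\<phi> (s + x)))"
    using assms(2) by (simp add: sum.reindex inj_on_def)
  ultimately show ?thesis by simp
qed

text \<open>The averaging inequality: integrating the translates \<open>\<phi>(s + \<cdot>)\<close>, \<open>s \<in> S\<close>, over a box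
  that contains all of them on \<open>(-r,r)\<^sup>d\<close> bounds \<open>|S|\<close> times the mass of \<open>\<phi>\<close> on \<open>(-r,r)\<^sup>d\<close>.\<close>

lemma feasible_average:
  assumes f: "feasible nrm \<phi>" and S: "finite S" "well_spread nrm S"
    and S_box: "\<And>s i. s \<in> S \<Longrightarrow> 0 \<le> s $ i \<and> s $ i \<le> W" and "0 \<le> W" "0 \<le> r"
  shows "of_nat (card S) * (\<integral>\<^sup>+x. ennreal (\<phi> x) * indicator (cube (-r) r) x \<partial>lebesgue)
          \<le> ennreal ((2*r + W) ^ CARD('d))"
proof -
  define A :: "(real^'d) set" where "A = cube (-r-W) r"
  have [measurable]: "\<phi> \<in> borel_measurable lebesgue"
    using f unfolding feasible_def by blast
  have meas: "(\<lambda>x. ennreal (\<phi> (s + x)) * indicator A x) \<in> borel_measurable lebesgue" for s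
  proof -
    have "(\<lambda>x. \<phi> (s + x)) \<in> borel_measurable lebesgue"
      by (rule measurable_translate) simp
    then show ?thesis
      unfolding A_def by measurable
  qed
  have shift: "(\<integral>\<^sup>+x. ennreal (\<phi> x) * indicator (cube (-r) r) x \<partial>lebesgue)
       \<le> (\<integral>\<^sup>+x. ennreal (\<phi> (s + x)) * indicator A x \<partial>lebesgue)" if "s \<in> S" for s
    unfolding A_def using S_box[OF that] by (intro nn_integral_cube_le_shifted) auto
  have "of_nat (card S) * (\<integral>\<^sup>+x. ennreal (\<phi> x) * indicator (cube (-r) r) x \<partial>lebesgue)
     \<le> (\<Sum>s\<in>S. \<integral>\<^sup>+x. ennreal (\<phi> (s + x)) * indicator A x \<partial>lebesgue)"
    using sum_mono[OF shift] by simp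
  also have "\<dots> = (\<integral>\<^sup>+x. (\<Sum>s\<in>S. ennreal (\<phi> (s + x)) * indicator A x) \<partial>lebesgue)"
    by (rule nn_integral_sum[symmetric]) (rule meas)
  also have "\<dots> = (\<integral>\<^sup>+x. (\<Sum>s\<in>S. ennreal (\<phi> (s + x))) * indicator A x \<partial>lebesgue)"
    by (simp only: sum_distrib_right)
  also have "\<dots> \<le> (\<integral>\<^sup>+x. 1 * indicator A x \<partial>lebesgue)"
  proof (rule nn_integral_mono)
    fix x :: "real^'d"
    show "(\<Sum>s\<in>S. ennreal (\<phi> (s + x))) * indicator A x \<le> 1 * indicator A x"
      using feasible_sum_translate[OF f S, of x] by (rule mult_right_mono) simp
  qed
  also have "\<dots> = emeasure lebesgue A"
    unfolding A_def by simp
  also have "\<dots> = ennreal ((r - (-r-W)) ^ CARD('d))"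
    unfolding A_def using assms by (intro emeasure_cube) linarith
  also have "r - (-r-W) = 2*r + W"
    by simp
  finally show ?thesis .
qed

lemma feasible_indicator:
  assumes E: "E \<in> sets lebesgue" and n: "1 \<le> n"
    and bound: "\<And>F. F \<subseteq> E \<Longrightarrow> finite F \<Longrightarrow> well_spread nrm F \<Longrightarrow> card F \<le> n"
  shows "feasible nrm (\<lambda>x. indicator E x / real n)"
  unfolding feasible_def
proof (intro conjI allI impI)
  show "(\<lambda>x. indicator E x / real n) \<in> borel_measurable lebesgue"
    using E by measurable
  show "0 \<le> indicator E x / real n" for x
    by simp
  fix S assume S: "well_spread nrm S"
  have fin: "finite (S \<inter> E) \<and> card (S \<inter> E) \<le> n"
    using bound well_spread_subset[OF S]
    by (intro finite_if_finite_subsets_card_bdd) auto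
  have "(\<Sum>\<^sub>\<infinity>v\<in>S. ennreal (indicator E v / real n)) = (\<Sum>\<^sub>\<infinity>v\<in>S \<inter> E. ennreal (1 / real n))"
    by (rule infsum_cong_neutral) (auto simp: indicator_def)
  also have "\<dots> = of_nat (card (S \<inter> E)) * ennreal (1 / real n)"
    using fin by simp
  also have "\<dots> \<le> of_nat n * ennreal (1 / real n)"
    using fin by (intro mult_right_mono) auto
  also have "\<dots> = 1"
    using n by (simp add: ennreal_of_nat_eq_real_of_nat ennreal_mult'[symmetric])
  finally show "(\<Sum>\<^sub>\<infinity>v\<in>S. ennreal (indicator E v / real n)) \<le> 1" .
qed

text \<open>A cube small enough that any two of its points are at \<open>nrm\<close>-distance less than 1.\<close>

definition small_radius :: real where
  "small_radius = 1 / (2 * real CARD('d) * (nrm_upper + 1))"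

lemma small_radius_pos: "0 < small_radius"
  unfolding small_radius_def using nrm_upper_nonneg by simp

lemma small_cube_close:
  assumes "x \<in> cube (-small_radius) small_radius" "y \<in> cube (-small_radius) small_radius"
  shows "nrm (x - y) < 1"
proof -
  have "\<bar>(x - y) $ i\<bar> < 2 * small_radius" for i
  proof -
    have "- small_radius < x $ i" "x $ i < small_radius" "- small_radius < y $ i" "y $ i < small_radius"
      using assms unfolding mem_cube by auto
    then show ?thesis
      by (simp add: abs_less_iff)
  qed
  then have "(\<Sum>i\<in>UNIV. \<bar>(x - y) $ i\<bar>) < (\<Sum>i\<in>(UNIV::'d set). 2 * small_radius)"
    by (intro sum_strict_mono) auto
  then have "norm (x - y) < real CARD('d) * (2 * small_radius)"
    using norm_le_l1_cart[of "x - y"] by simp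
  then have "(nrm_upper + 1) * norm (x - y) < (nrm_upper + 1) * (real CARD('d) * (2 * small_radius))"
    using nrm_upper_nonneg by (intro mult_strict_left_mono) auto
  also have "\<dots> = 1"
    unfolding small_radius_def using nrm_upper_nonneg by simp
  finally have "(nrm_upper + 1) * norm (x - y) < 1" .
  moreover have "nrm_upper * norm (x - y) \<le> (nrm_upper + 1) * norm (x - y)"
    by (simp add: algebra_simps)
  ultimately show ?thesis
    using nrm_le_norm[of "x - y"] by linarith
qed

lemma small_cube_in_unit_ball: "cube (-small_radius) small_radius \<subseteq> unit_ball nrm"
  using small_cube_close[of _ 0] small_radius_pos by (auto simp: unit_ball_def mem_cube)

lemma feasible_small_cube: "feasible nrm (indicator (cube (-small_radius) small_radius))"
proof -
  have "card F \<le> 1" if "F \<subseteq> cube (-small_radius) small_radius" "finite F" "well_spread nrm F" for F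
    using that small_cube_close card_le_Suc0_iff_eq[of F] unfolding well_spread_def
    by (metis One_nat_def less_asym subsetD)
  from feasible_indicator[of _ 1, OF _ _ this] show ?thesis
    by simp
qed

text \<open>Volume argument: a finite well-spread set in \<open>[0,W]\<^sup>d\<close> has boundedly many points.\<close>

lemma well_spread_card_bound:
  assumes S: "finite S" "well_spread nrm S"
    and S_box: "\<And>s i. s \<in> S \<Longrightarrow> 0 \<le> s $ i \<and> s $ i \<le> W" and W: "0 \<le> W"
  shows "real (card S) * (2 * small_radius) ^ CARD('d) \<le> (2 * small_radius + W) ^ CARD('d)"
proof -
  let ?E = "cube (-small_radius) small_radius :: (real^'d) set"
  have "of_nat (card S) * (\<integral>\<^sup>+x. ennreal (indicator ?E x) * indicator ?E x \<partial>lebesgue)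
      \<le> ennreal ((2 * small_radius + W) ^ CARD('d))"
    using small_radius_pos by (intro feasible_average[OF feasible_small_cube S S_box W]) auto
  moreover have "(\<integral>\<^sup>+x. ennreal (indicator ?E x) * indicator ?E x \<partial>lebesgue)
      = (\<integral>\<^sup>+x. indicator ?E x \<partial>lebesgue)"
    by (intro nn_integral_cong) (auto simp: indicator_def)
  moreover have "(\<integral>\<^sup>+x. indicator ?E x \<partial>lebesgue) = emeasure lebesgue ?E"
    by simp
  moreover have "emeasure lebesgue ?E = ennreal ((2 * small_radius) ^ CARD('d))"
    using small_radius_pos emeasure_cube[of "-small_radius" small_radius] by simp
  ultimately have "ennreal (real (card S) * (2 * small_radius) ^ CARD('d))
      \<le> ennreal ((2 * small_radius + W) ^ CARD('d))"
    using small_radius_pos by (simp add: ennreal_mult' ennreal_of_nat_eq_real_of_nat)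
  then show ?thesis
    using W small_radius_pos by (subst (asm) ennreal_le_iff) auto
qed

lemma volume_unit_ball_pos: "0 < measure lborel (unit_ball nrm)"
proof -
  have "unit_ball nrm \<in> fmeasurable lborel"
    using unit_ball_borel emeasure_bounded_finite[OF unit_ball_bounded] by (simp add: fmeasurable_def)
  then have "measure lborel (cube (-small_radius) small_radius :: (real^'d) set)
      \<le> measure lborel (unit_ball nrm)"
    by (intro measure_mono_fmeasurable small_cube_in_unit_ball) auto
  moreover have "measure lborel (cube (-small_radius) small_radius :: (real^'d) set)
      = (2 * small_radius) ^ CARD('d)"
    using emeasure_cube[of "-small_radius" small_radius] small_radius_pos
    unfolding measure_def cube_def by simp
  moreover have "0 < (2 * small_radius) ^ CARD('d)"
    using small_radius_pos by simp
  ultimately show ?thesis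
    by linarith
qed

section \<open>Packings\<close>

definition packing :: "real \<Rightarrow> (real^'d) set \<Rightarrow> bool" where
  "packing K C \<longleftrightarrow> finite C \<and> C \<subseteq> {x. \<forall>i. 0 < x $ i \<and> x $ i < K} \<and>
     (\<forall>c\<in>C. \<forall>c'\<in>C. c \<noteq> c' \<longrightarrow> 2 \<le> nrm (c - c'))"

lemma packing_finite: "packing K C \<Longrightarrow> finite C"
  and packing_box: "packing K C \<Longrightarrow> c \<in> C \<Longrightarrow> 0 < c $ i \<and> c $ i < K"
  and packing_sep: "packing K C \<Longrightarrow> c \<in> C \<Longrightarrow> c' \<in> C \<Longrightarrow> c \<noteq> c' \<Longrightarrow> 2 \<le> nrm (c - c')"
  unfolding packing_def by blast+

lemma packing_well_spread: "packing K C \<Longrightarrow> well_spread nrm C"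
  unfolding well_spread_def using packing_sep by fastforce

lemma max_packing_eq: "max_packing nrm K = Max {card C | C. packing K C}"
  unfolding max_packing_def packing_def translates_disjoint_iff ..

lemma packing_sizes_finite: "finite {card C | C. packing K C}"
proof -
  define b where "b = (2 * small_radius + \<bar>K\<bar>) ^ CARD('d) / (2 * small_radius) ^ CARD('d)"
  have bound: "real (card C) \<le> b" if C: "packing K C" for C
  proof -
    have "real (card C) * (2 * small_radius) ^ CARD('d) \<le> (2 * small_radius + \<bar>K\<bar>) ^ CARD('d)"
    proof (rule well_spread_card_bound)
      show "finite C"
        using packing_finite[OF C] .
      show "well_spread nrm C"
        using packing_well_spread[OF C] .
      show "0 \<le> s $ i \<and> s $ i \<le> \<bar>K\<bar>" if "s \<in> C" for s i
        using packing_box[OF C that, of i] by linarith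
    qed simp
    then show ?thesis
      unfolding b_def using small_radius_pos by (simp add: pos_le_divide_eq)
  qed
  have "card C \<le> nat \<lceil>b\<rceil>" if "packing K C" for C
    using bound[OF that] by (simp add: le_nat_iff le_ceiling_iff)
  then have "{card C | C. packing K C} \<subseteq> {..nat \<lceil>b\<rceil>}"
    by blast
  then show ?thesis
    using finite_subset by blast
qed

lemma card_le_max_packing: "packing K C \<Longrightarrow> card C \<le> max_packing nrm K"
  unfolding max_packing_eq by (rule Max_ge[OF packing_sizes_finite]) blast

lemma max_packing_attained: obtains C where "packing K C" "card C = max_packing nrm K"
proof -
  have "packing K {}"
    by (simp add: packing_def)
  then have "{card C | C. packing K C} \<noteq> {}"
    by blast
  from Max_in[OF packing_sizes_finite this] show ?thesis
    using that unfolding max_packing_eq by auto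
qed

lemma max_packing_pos: "0 < K \<Longrightarrow> 1 \<le> max_packing nrm K"
  using card_le_max_packing[of K "{\<chi> i. K / 2}"] by (simp add: packing_def)

lemma packing_double:
  assumes "T \<subseteq> cube 0 (K/2)" "finite T" "well_spread nrm T"
  shows "packing K ((*\<^sub>R) 2 ` T)"
  unfolding packing_def
proof (intro conjI ballI impI)
  show "finite ((*\<^sub>R) 2 ` T)"
    using assms(2) by simp
  show "(*\<^sub>R) 2 ` T \<subseteq> {x. \<forall>i. 0 < x $ i \<and> x $ i < K}"
  proof safe
    fix t i assume "t \<in> T"
    then have "0 < t $ i \<and> t $ i < K/2"
      using assms(1) mem_cube by blast
    then show "0 < (2 *\<^sub>R t) $ i" "(2 *\<^sub>R t) $ i < K"
      by auto
  qed
  fix c c' assume "c \<in> (*\<^sub>R) 2 ` T" "c' \<in> (*\<^sub>R) 2 ` T" "c \<noteq> c'"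
  then obtain t t' where tt': "t \<in> T" "t' \<in> T" "t \<noteq> t'" "c - c' = 2 *\<^sub>R (t - t')"
    by (auto simp: scaleR_diff_right)
  then have "1 < nrm (t - t')"
    using assms(3) unfolding well_spread_def by blast
  then show "2 \<le> nrm (c - c')"
    using tt'(4) by (simp add: nrm_scaleR)
qed

lemma well_spread_shrink:
  assumes C: "packing L C" and q: "1 < q"
  shows "finite ((*\<^sub>R) (q/2) ` C)" "card ((*\<^sub>R) (q/2) ` C) = card C"
    "well_spread nrm ((*\<^sub>R) (q/2) ` C)"
    "\<And>t i. t \<in> (*\<^sub>R) (q/2) ` C \<Longrightarrow> 0 \<le> t $ i \<and> t $ i \<le> q * L / 2"
proof -
  show "finite ((*\<^sub>R) (q/2) ` C)"
    using packing_finite[OF C] by simp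
  show "card ((*\<^sub>R) (q/2) ` C) = card C"
    using q by (intro card_image) (auto simp: inj_on_def)
  show "well_spread nrm ((*\<^sub>R) (q/2) ` C)"
    unfolding well_spread_def
  proof (intro ballI impI)
    fix v w assume "v \<in> (*\<^sub>R) (q/2) ` C" "w \<in> (*\<^sub>R) (q/2) ` C" "v \<noteq> w"
    then obtain c c' where cc': "c \<in> C" "c' \<in> C" "c \<noteq> c'" "v - w = (q/2) *\<^sub>R (c - c')"
      by (auto simp: scaleR_diff_right)
    then have "2 \<le> nrm (c - c')"
      using packing_sep[OF C] by blast
    moreover from this have "1 * nrm (c - c') < q * nrm (c - c')"
      using q by (intro mult_strict_right_mono) auto
    moreover have "nrm (v - w) = q / 2 * nrm (c - c')"
      using cc'(4) q by (simp add: nrm_scaleR)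
    ultimately show "1 < nrm (v - w)"
      by linarith
  qed
  fix t i assume "t \<in> (*\<^sub>R) (q/2) ` C"
  then obtain c where "c \<in> C" "t $ i = q / 2 * c $ i"
    by auto
  moreover from this have "0 \<le> q / 2 * c $ i" "q / 2 * c $ i \<le> q / 2 * L"
    using packing_box[OF C] q by (auto intro!: mult_left_mono mult_nonneg_nonneg less_imp_le)
  ultimately show "0 \<le> t $ i \<and> t $ i \<le> q * L / 2"
    by simp
qed

text \<open>The gap \<open>h\<close> makes points of
  different copies differ by more than \<open>h\<close> in some coordinate, hence by at least 2 in \<open>nrm\<close>.\<close>

definition tile_gap :: real where
  "tile_gap = 2 / nrm_lower"

lemma tile_gap_pos: "0 < tile_gap"
  unfolding tile_gap_def using nrm_lower_pos by simp

lemma tile_points_separated: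
  assumes C: "packing K C" and cf: "c \<in> C" "c' \<in> C" and ne: "(c, f) \<noteq> (c', f')"
  shows "2 \<le> nrm (tile_point (K + tile_gap) c f - tile_point (K + tile_gap) c' f')"
    (is "2 \<le> nrm ?z")
proof (cases "f = f'")
  case True
  then show ?thesis
    using packing_sep[OF C cf] ne by (simp add: tile_point_def)
next
  case False
  then obtain i where "f i \<noteq> f' i"
    by blast
  then have "tile_gap < \<bar>?z $ i\<bar>"
    using periodic_shift_gap[of "c $ i" K "c' $ i" "f i" "f' i" tile_gap]
      packing_box[OF C cf(1)] packing_box[OF C cf(2)] tile_gap_pos
    by (simp add: tile_point_def algebra_simps)
  then have "nrm_lower * tile_gap < nrm_lower * \<bar>?z $ i\<bar>"
    using nrm_lower_pos by (intro mult_strict_left_mono)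
  then have "nrm_lower * tile_gap < nrm ?z"
    using component_le_nrm[of ?z i] by linarith
  then show ?thesis
    unfolding tile_gap_def using nrm_lower_pos by simp
qed

lemma packing_tiling:
  assumes C: "packing K C" and K: "0 < K" and m: "1 \<le> m"
  obtains T where "packing (real m * (K + tile_gap)) T" "card T = card C * m ^ CARD('d)"
proof -
  define P where "P = K + tile_gap"
  define G :: "(real^'d) \<times> ('d \<Rightarrow> nat) \<Rightarrow> real^'d" where "G = (\<lambda>(c, f). tile_point P c f)"
  define X where "X = C \<times> (PiE (UNIV :: 'd set) (\<lambda>_. {..<m}))"
  have sep: "2 \<le> nrm (G x - G y)" if "x \<in> X" "y \<in> X" "x \<noteq> y" for x y
    using that tile_points_separated[OF C] unfolding X_def G_def P_def by auto
  have inj: "inj_on G X"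
  proof (rule inj_onI)
    fix x y assume "x \<in> X" "y \<in> X" "G x = G y"
    then show "x = y"
      using sep[of x y] by fastforce
  qed
  have "packing (real m * P) (G ` X)"
    unfolding packing_def
  proof (intro conjI ballI impI)
    show "finite (G ` X)"
      using packing_finite[OF C] unfolding X_def by (simp add: finite_PiE)
    show "G ` X \<subseteq> {x. \<forall>i. 0 < x $ i \<and> x $ i < real m * P}"
    proof safe
      fix c f i assume "(c, f) \<in> X"
      then show "0 < G (c, f) $ i" "G (c, f) $ i < real m * P"
        using packing_box[OF C, of c i] tile_point_box[of c i K f m P] tile_gap_pos
        unfolding X_def G_def P_def by auto
    qed
    show "2 \<le> nrm (c - c')" if "c \<in> G ` X" "c' \<in> G ` X" "c \<noteq> c'" for c c'
      using that sep by blast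
  qed
  moreover have "card (G ` X) = card C * m ^ CARD('d)"
    using card_image[OF inj] unfolding X_def by (simp add: card_cartesian_product card_PiE)
  ultimately show ?thesis
    using that unfolding P_def by blast
qed

abbreviation feasible_sup :: ennreal where
  "feasible_sup \<equiv> (SUP \<phi>\<in>{\<phi>. feasible nrm \<phi>}. \<integral>\<^sup>+ x. ennreal (\<phi> x) \<partial>lebesgue)"

text \<open>Lower bound: the indicator of \<open>(0,K/2)\<^sup>d\<close>, divided by \<open>N(K)\<close>, is feasible.\<close>

lemma feasible_sup_lower:
  assumes K: "0 < K"
  shows "ennreal ((K/2) ^ CARD('d) / real (max_packing nrm K)) \<le> feasible_sup"
proof -
  let ?Q = "cube 0 (K/2) :: (real^'d) set" and ?N = "max_packing nrm K"
  have "card T \<le> ?N" if "T \<subseteq> ?Q" "finite T" "well_spread nrm T" for T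
    using card_le_max_packing[OF packing_double[OF that]] card_image[of "(*\<^sub>R) 2" T]
    by (simp add: inj_on_def)
  then have "feasible nrm (\<lambda>x. indicator ?Q x / real ?N)"
    by (intro feasible_indicator max_packing_pos K) auto
  moreover have "(\<integral>\<^sup>+ x. ennreal (indicator ?Q x / real ?N) \<partial>lebesgue)
      = ennreal ((K/2) ^ CARD('d) / real ?N)"
  proof -
    have "(\<integral>\<^sup>+ x. ennreal (indicator ?Q x / real ?N) \<partial>lebesgue)
        = (\<integral>\<^sup>+ x. ennreal (1 / real ?N) * indicator ?Q x \<partial>lebesgue)"
      by (intro nn_integral_cong) (auto simp: indicator_def)
    also have "\<dots> = ennreal (1 / real ?N) * emeasure lebesgue ?Q"
      by (rule nn_integral_cmult_indicator) simp
    also have "\<dots> = ennreal (1 / real ?N) * ennreal ((K/2) ^ CARD('d))"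
      using K emeasure_cube[where 'd='d, of 0 "K/2"] by simp
    finally show ?thesis
      using K by (simp flip: ennreal_mult')
  qed
  ultimately show ?thesis
    using SUP_upper[of "\<lambda>x. indicator ?Q x / real ?N" "{\<phi>. feasible nrm \<phi>}"
        "\<lambda>\<phi>. \<integral>\<^sup>+ x. ennreal (\<phi> x) \<partial>lebesgue"] by simp
qed

text \<open>Upper bound for the mass of a feasible function on a cube, via a tiled and shrunk
  optimal packing.\<close>

lemma feasible_cube_upper:
  assumes f: "feasible nrm \<phi>" and K: "0 < K" and q: "1 < q" and r: "0 \<le> r"
  shows "of_nat (max_packing nrm K) * (\<integral>\<^sup>+x. ennreal (\<phi> x) * indicator (cube (-r) r) x \<partial>lebesgue)
     \<le> ennreal ((q * (K + tile_gap) / 2) ^ CARD('d))"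
proof -
  define J where "J = (\<integral>\<^sup>+x. ennreal (\<phi> x) * indicator (cube (-r) r) x \<partial>lebesgue)"
  define P where "P = K + tile_gap"
  define \<mu> where "\<mu> = (1 + q) / 2"
  define m where "m = nat \<lceil>4 * r / ((q - \<mu>) * P)\<rceil> + 1"
  have P: "0 < P" and \<mu>: "1 < \<mu>" "\<mu> < q" and m: "1 \<le> m"
    unfolding P_def \<mu>_def m_def using K q tile_gap_pos by auto
  have "4 * r / ((q - \<mu>) * P) \<le> real m"
    unfolding m_def by linarith
  then have m_large: "2 * r + \<mu> * (real m * P) / 2 \<le> real m * (q * P / 2)"
    using \<mu> P by (simp add: field_simps)
  obtain C where C: "packing K C" "card C = max_packing nrm K"
    using max_packing_attained by blast
  obtain T where T: "packing (real m * P) T" "card T = max_packing nrm K * m ^ CARD('d)"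
    using packing_tiling[OF C(1) K m] C(2) unfolding P_def by metis
  note T' = well_spread_shrink[OF T(1) \<mu>(1)]
  have "of_nat (m ^ CARD('d)) * (of_nat (max_packing nrm K) * J)
      \<le> ennreal ((2 * r + \<mu> * (real m * P) / 2) ^ CARD('d))"
    using feasible_average[OF f T'(1,3,4) _ r] T'(2) T(2) \<mu> P
    unfolding J_def by (simp add: mult_ac)
  also have "\<dots> \<le> ennreal ((real m * (q * P / 2)) ^ CARD('d))"
    using m_large \<mu> P r by (intro ennreal_leI power_mono) auto
  also have "(real m * (q * P / 2)) ^ CARD('d) = real (m ^ CARD('d)) * (q * P / 2) ^ CARD('d)"
    by (simp only: power_mult_distrib of_nat_power)
  also have "ennreal \<dots> = of_nat (m ^ CARD('d)) * ennreal ((q * P / 2) ^ CARD('d))"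
    using q P by (simp add: ennreal_mult ennreal_of_nat_eq_real_of_nat)
  finally have "of_nat (max_packing nrm K) * J \<le> ennreal ((q * P / 2) ^ CARD('d))"
    using m by (subst (asm) ennreal_mult_le_mult_iff) (auto simp del: of_nat_power)
  then show ?thesis
    unfolding J_def P_def .
qed

lemma feasible_upper:
  assumes f: "feasible nrm \<phi>" and K: "0 < K" and q: "1 < q"
  shows "of_nat (max_packing nrm K) * (\<integral>\<^sup>+x. ennreal (\<phi> x) \<partial>lebesgue)
     \<le> ennreal ((q * (K + tile_gap) / 2) ^ CARD('d))"
proof -
  have meas: "\<phi> \<in> borel_measurable lebesgue"
    using f unfolding feasible_def by blast
  show ?thesis
    unfolding nn_integral_SUP_cubes[OF meas] SUP_mult_left_ennreal
    by (intro SUP_least feasible_cube_upper[OF f K q]) simp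
qed

lemma feasible_sup_bounds:
  "\<exists>s>0. feasible_sup = ennreal s \<and>
     (\<forall>K>0. (K/2) ^ CARD('d) \<le> real (max_packing nrm K) * s \<and>
            real (max_packing nrm K) * s \<le> ((1 + 1/K) * (K + tile_gap) / 2) ^ CARD('d))"
proof -
  have upper: "of_nat (max_packing nrm K) * feasible_sup \<le> ennreal ((q * (K + tile_gap) / 2) ^ CARD('d))"
    if "0 < K" "1 < q" for K q
    unfolding SUP_mult_left_ennreal by (rule SUP_least) (use feasible_upper[OF _ that] in auto)
  have "feasible_sup \<le> of_nat (max_packing nrm 1) * feasible_sup"
    using max_packing_pos[of 1] mult_right_mono[of 1 "of_nat (max_packing nrm 1)" feasible_sup]
    by simp
  also have "\<dots> \<le> ennreal ((2 * (1 + tile_gap) / 2) ^ CARD('d))"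
    by (rule upper) auto
  finally have "feasible_sup \<noteq> top"
    using ennreal_less_top order.strict_trans1 by (metis less_imp_neq)
  then obtain s where s: "feasible_sup = ennreal s" "0 \<le> s"
    by (cases feasible_sup rule: ennreal_cases) auto
  have lower: "(K/2) ^ CARD('d) / real (max_packing nrm K) \<le> s" if "0 < K" for K
    using feasible_sup_lower[OF that] s by simp
  have "0 < (1/2) ^ CARD('d) / real (max_packing nrm 1)"
    using max_packing_pos[of 1] by simp
  then have "0 < s"
    using lower[of 1] by simp
  moreover have "(K/2) ^ CARD('d) \<le> real (max_packing nrm K) * s" if "0 < K" for K
    using lower[OF that] max_packing_pos[OF that] by (simp add: divide_le_eq mult.commute)
  moreover have "real (max_packing nrm K) * s \<le> ((1 + 1/K) * (K + tile_gap) / 2) ^ CARD('d)"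
    if "0 < K" for K
  proof -
    have "ennreal (real (max_packing nrm K) * s) = of_nat (max_packing nrm K) * feasible_sup"
      using s by (simp add: ennreal_mult ennreal_of_nat_eq_real_of_nat)
    also have "\<dots> \<le> ennreal (((1 + 1/K) * (K + tile_gap) / 2) ^ CARD('d))"
      using that by (intro upper) auto
    finally show ?thesis
      using that tile_gap_pos by (subst (asm) ennreal_le_iff) auto
  qed
  ultimately show ?thesis
    using s by blast
qed

end

section \<open>The packing density\<close>

lemma squeezed_density_limit:
  fixes N :: "real \<Rightarrow> real" and s V h :: real and n :: nat
  assumes s: "0 < s"
    and lower: "\<And>K. 0 < K \<Longrightarrow> (K/2) ^ n \<le> N K * s"
    and upper: "\<And>K. 0 < K \<Longrightarrow> N K * s \<le> ((1 + 1/K) * (K + h) / 2) ^ n"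
  shows "((\<lambda>K. N K * V / K ^ n) \<longlongrightarrow> V / (2 ^ n * s)) at_top"
proof -
  define g where "g K = (1 + 1/K) * (1 + h/K)" for K :: real
  have lim: "((\<lambda>K. 2 ^ n * (N K * s) / K ^ n) \<longlongrightarrow> 1) at_top"
  proof (rule tendsto_sandwich)
    show "\<forall>\<^sub>F K in at_top. 1 \<le> 2 ^ n * (N K * s) / K ^ n"
      using eventually_gt_at_top[of 0]
    proof eventually_elim
      case (elim K)
      have "K ^ n / 2 ^ n \<le> N K * s"
        using lower[OF elim] by (simp add: power_divide)
      then have "K ^ n \<le> 2 ^ n * (N K * s)"
        by (simp add: divide_le_eq mult.commute)
      then show ?case
        using elim by (simp add: le_divide_eq)
    qed
    show "\<forall>\<^sub>F K in at_top. 2 ^ n * (N K * s) / K ^ n \<le> g K ^ n"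
      using eventually_gt_at_top[of 0]
    proof eventually_elim
      case (elim K)
      have "(1 + 1/K) * (K + h) / 2 = K * g K / 2"
        unfolding g_def using elim by (simp add: field_simps)
      then have "N K * s \<le> K ^ n * g K ^ n / 2 ^ n"
        using upper[OF elim] by (simp add: power_divide power_mult_distrib)
      then have "2 ^ n * (N K * s) \<le> g K ^ n * K ^ n"
        by (simp add: le_divide_eq mult.commute)
      then show ?case
        using elim by (simp add: divide_le_eq)
    qed
    have "((\<lambda>K. g K ^ n) \<longlongrightarrow> ((1 + 0) * (1 + 0)) ^ n) at_top"
      unfolding g_def
      by (intro tendsto_intros tendsto_divide_0[OF tendsto_const]
          filterlim_at_top_imp_at_infinity[OF filterlim_ident])
    then show "((\<lambda>K. g K ^ n) \<longlongrightarrow> 1) at_top"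
      by simp
  qed simp
  have eq: "(\<lambda>K. V / (2 ^ n * s) * (2 ^ n * (N K * s) / K ^ n)) = (\<lambda>K. N K * V / K ^ n)"
    using s by (intro ext) (simp add: field_simps)
  from tendsto_mult_left[OF lim, of "V / (2 ^ n * s)"] show ?thesis
    unfolding eq by simp
qed

theorem lemma5p3:
  fixes nrm :: "real^'d \<Rightarrow> real"
  assumes "is_norm nrm"
  shows "(SUP \<phi>\<in>{\<phi>. feasible nrm \<phi>}. \<integral>\<^sup>+ x. ennreal (\<phi> x) \<partial>lebesgue)
         = ennreal (measure lborel (unit_ball nrm) / (2 ^ CARD('d) * packing_density nrm))"
proof -
  interpret abstract_norm nrm
    by (rule abstract_norm.intro[OF assms])
  define V where "V = measure lborel (unit_ball nrm)"
  obtain s where s: "0 < s" "feasible_sup = ennreal s"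
    and bounds: "\<forall>K>0. (K/2) ^ CARD('d) \<le> real (max_packing nrm K) * s \<and>
        real (max_packing nrm K) * s \<le> ((1 + 1/K) * (K + tile_gap) / 2) ^ CARD('d)"
    using feasible_sup_bounds by blast
  have "((\<lambda>K. real (max_packing nrm K) * V / K ^ CARD('d)) \<longlongrightarrow> V / (2 ^ CARD('d) * s)) at_top"
    using bounds by (intro squeezed_density_limit[OF s(1)]) auto
  then have "packing_density nrm = V / (2 ^ CARD('d) * s)"
    unfolding packing_density_def V_def by (intro tendsto_Lim) simp_all
  moreover have "0 < V"
    unfolding V_def by (rule volume_unit_ball_pos)
  ultimately have "V / (2 ^ CARD('d) * packing_density nrm) = s"
    using s(1) by simp
  then show ?thesis
    using s(2) unfolding V_def by simp
qed

end
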